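(* Let $G$ be a finite trivially power-colorable graph with $k=\chi(G)$, let $\lambda$ be an infinite cardinal, and let $\Phi$ be a proper $k$-coloring of $G^\lambda$. Then there exist an ultrafilter $\mathcal U$ on $\lambda$ and a proper $k$-coloring $\phi$ of $G$ such that $\Phi=\phi^{\mathcal U}$.
   Context: Graphs are simple and undirected; a $k$-coloring is a proper coloring with colors in $\{0,\dots,k-1\}$. For graphs $(G_i)_{i\in I}$, the product $\times_{i\in I}G_i$ has vertex set $\times_{i\in I}V(G_i)$, with $(u_i)$ adjacent to $(v_i)$ iff $u_iv_i\in E(G_i)$ for all $i$; $G^I$ is the product of copies of $G$ indexed by $I$, and $G^n=G^{\{1,\dots,n\}}$. A coloring $\Phi$ of a product is trivial if there exist an index $i^*$ and a proper coloring $\phi$ of $G_{i^*}$ with $\Phi(v)=\phi(v_{i^*})$ for all $v$. $G$ is trivially power-colorable if for every positive integer $n$, every $\chi(G)$-coloring of $G^n$ is trivial. For an ultrafilter $\mathcal U$ on $\lambda$ and $\mathbf v=(v_\alpha)_{\alpha<\lambda}\in V(G^\lambda)$, $\mathbf v_{\mathcal U}$ is the unique $x\in V(G)$ with $\{\alpha<\lambda:v_\alpha=x\}\in\mathcal U$, and $\phi^{\mathcal U}(\mathbf v)=\phi(\mathbf v_{\mathcal U})$. *)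

theory Defs
  imports Main "HOL-Library.FuncSet"
begin

definition simple_graph :: "'a set \<Rightarrow> ('a \<Rightarrow> 'a \<Rightarrow> bool) \<Rightarrow> bool" where
  "simple_graph V E \<longleftrightarrow> (\<forall>u v. E u v \<longrightarrow> u \<in> V \<and> v \<in> V) \<and>
     (\<forall>u v. E u v \<longrightarrow> E v u) \<and> (\<forall>v. \<not> E v v)"

definition proper_coloring :: "'a set \<Rightarrow> ('a \<Rightarrow> 'a \<Rightarrow> bool) \<Rightarrow> ('a \<Rightarrow> nat) \<Rightarrow> bool" where
  "proper_coloring V E c \<longleftrightarrow> (\<forall>u\<in>V. \<forall>v\<in>V. E u v \<longrightarrow> c u \<noteq> c v)"

definition k_coloring :: "nat \<Rightarrow> 'a set \<Rightarrow> ('a \<Rightarrow> 'a \<Rightarrow> bool) \<Rightarrow> ('a \<Rightarrow> nat) \<Rightarrow> bool" where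
  "k_coloring k V E c \<longleftrightarrow> proper_coloring V E c \<and> (\<forall>v\<in>V. c v < k)"

definition chromatic_number :: "'a set \<Rightarrow> ('a \<Rightarrow> 'a \<Rightarrow> bool) \<Rightarrow> nat" where
  "chromatic_number V E = (LEAST k. \<exists>c. k_coloring k V E c)"

definition power_verts :: "'i set \<Rightarrow> 'a set \<Rightarrow> ('i \<Rightarrow> 'a) set" where
  "power_verts I V = (I \<rightarrow>\<^sub>E V)"

definition power_edges :: "'i set \<Rightarrow> ('a \<Rightarrow> 'a \<Rightarrow> bool) \<Rightarrow> ('i \<Rightarrow> 'a) \<Rightarrow> ('i \<Rightarrow> 'a) \<Rightarrow> bool" where
  "power_edges I E u v \<longleftrightarrow> (\<forall>i\<in>I. E (u i) (v i))"

definition trivial_coloring :: "'i set \<Rightarrow> 'a set \<Rightarrow> ('a \<Rightarrow> 'a \<Rightarrow> bool) \<Rightarrow> (('i \<Rightarrow> 'a) \<Rightarrow> nat) \<Rightarrow> bool" where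
  "trivial_coloring I V E \<Phi> \<longleftrightarrow>
     (\<exists>i\<in>I. \<exists>\<phi>. proper_coloring V E \<phi> \<and> (\<forall>v\<in>power_verts I V. \<Phi> v = \<phi> (v i)))"

definition trivially_power_colorable :: "'a set \<Rightarrow> ('a \<Rightarrow> 'a \<Rightarrow> bool) \<Rightarrow> bool" where
  "trivially_power_colorable V E \<longleftrightarrow>
     (\<forall>n::nat. n \<ge> 1 \<longrightarrow> (\<forall>\<Phi>. k_coloring (chromatic_number V E) (power_verts {1..n} V) (power_edges {1..n} E) \<Phi>
        \<longrightarrow> trivial_coloring {1..n} V E \<Phi>))"

definition ultrafilter_on :: "'i set \<Rightarrow> 'i set set \<Rightarrow> bool" where
  "ultrafilter_on I U \<longleftrightarrow> U \<subseteq> Pow I \<and> I \<in> U \<and> {} \<notin> U \<and>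
     (\<forall>A B. A \<in> U \<longrightarrow> A \<subseteq> B \<longrightarrow> B \<subseteq> I \<longrightarrow> B \<in> U) \<and>
     (\<forall>A B. A \<in> U \<longrightarrow> B \<in> U \<longrightarrow> A \<inter> B \<in> U) \<and>
     (\<forall>A. A \<subseteq> I \<longrightarrow> A \<in> U \<or> I - A \<in> U)"

definition ult_point :: "'i set \<Rightarrow> 'i set set \<Rightarrow> 'a set \<Rightarrow> ('i \<Rightarrow> 'a) \<Rightarrow> 'a" where
  "ult_point I U V v = (THE x. x \<in> V \<and> {\<alpha>\<in>I. v \<alpha> = x} \<in> U)"

definition ult_coloring :: "'i set \<Rightarrow> 'i set set \<Rightarrow> 'a set \<Rightarrow> ('a \<Rightarrow> nat) \<Rightarrow> ('i \<Rightarrow> 'a) \<Rightarrow> nat" where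
  "ult_coloring I U V \<phi> v = \<phi> (ult_point I U V v)"

end

theory Submission
  imports Defs
begin

text \<open>
  Restricting \<open>\<Phi>\<close> to vertices of \<open>G\<^sup>\<Lambda>\<close> that are constant on the classes of a finite
  partition of \<open>\<Lambda>\<close> gives a \<open>\<chi>(G)\<close>-colouring of a finite power of \<open>G\<close>, which is trivial:
  one class decides the colour. If \<open>\<Phi>\<close> is non-constant on the diagonal, the deciding class
  is unique and compatible with refinement of partitions. Hence the sets \<open>A\<close> on which
  agreement with a constant vertex already forces agreement of colours form an ultrafilter
  \<open>\<U>\<close>, and every vertex \<open>v\<close> gets the colour of the constant vertex with value \<open>v\<^sub>\<U>\<close>.
  If \<open>G\<close> has no edges, \<open>\<Phi>\<close> is constant and any principal ultrafilter works.
\<close>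

lemma restrict_comp_in_power_verts:
  assumes "w \<in> power_verts S V" and "q ` \<Lambda> \<subseteq> S"
  shows "(\<lambda>\<alpha>\<in>\<Lambda>. w (q \<alpha>)) \<in> power_verts \<Lambda> V"
  using assms unfolding power_verts_def by auto

lemma k_coloring_restrict_comp:
  assumes col: "k_coloring k (power_verts \<Lambda> V) (power_edges \<Lambda> E) \<Phi>" and q: "q ` \<Lambda> \<subseteq> S"
  shows "k_coloring k (power_verts S V) (power_edges S E) (\<lambda>w. \<Phi> (\<lambda>\<alpha>\<in>\<Lambda>. w (q \<alpha>)))"
proof -
  have "power_edges \<Lambda> E (\<lambda>\<alpha>\<in>\<Lambda>. u (q \<alpha>)) (\<lambda>\<alpha>\<in>\<Lambda>. w (q \<alpha>))"
    if "power_edges S E u w" for u w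
    using that q unfolding power_edges_def by auto
  then show ?thesis
    using col restrict_comp_in_power_verts[OF _ q]
    unfolding k_coloring_def proper_coloring_def by blast
qed

lemma k_coloring_diagonal:
  assumes "k_coloring k (power_verts \<Lambda> V) (power_edges \<Lambda> E) \<Phi>"
  shows "k_coloring k V E (\<lambda>x. \<Phi> (\<lambda>\<alpha>\<in>\<Lambda>. x))"
proof -
  have "(\<lambda>\<alpha>\<in>\<Lambda>. x) \<in> power_verts \<Lambda> V" if "x \<in> V" for x
    using that unfolding power_verts_def by auto
  moreover have "power_edges \<Lambda> E (\<lambda>\<alpha>\<in>\<Lambda>. x) (\<lambda>\<alpha>\<in>\<Lambda>. y)" if "E x y" for x y
    using that unfolding power_edges_def by auto
  ultimately show ?thesis
    using assms unfolding k_coloring_def proper_coloring_def by blast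
qed

lemma trivial_coloring_finite_power:
  assumes tpc: "trivially_power_colorable V E" and S: "finite S" "S \<noteq> {}"
    and col: "k_coloring (chromatic_number V E) (power_verts S V) (power_edges S E) \<Psi>"
  shows "trivial_coloring S V E \<Psi>"
proof -
  define n where "n = card S"
  obtain f where f: "bij_betw f {1..n} S"
    using ex_bij_betw_nat_finite_1[OF S(1)] unfolding n_def by blast
  define g where "g = inv_into {1..n} f"
  have g: "g ` S \<subseteq> {1..n}" and fg: "\<And>s. s \<in> S \<Longrightarrow> f (g s) = s"
    using f unfolding g_def by (auto simp: bij_betw_def inv_into_into f_inv_into_f)
  have "n \<ge> 1"
    using S unfolding n_def by (simp add: Suc_le_eq card_gt_0_iff)
  then have "trivial_coloring {1..n} V E (\<lambda>w. \<Psi> (\<lambda>s\<in>S. w (g s)))"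
    using tpc k_coloring_restrict_comp[OF col g] unfolding trivially_power_colorable_def by blast
  then obtain i \<phi> where i: "i \<in> {1..n}" and \<phi>: "proper_coloring V E \<phi>"
    and triv: "\<forall>w\<in>power_verts {1..n} V. \<Psi> (\<lambda>s\<in>S. w (g s)) = \<phi> (w i)"
    unfolding trivial_coloring_def by blast
  have "\<Psi> u = \<phi> (u (f i))" if u: "u \<in> power_verts S V" for u
  proof -
    define w where "w = (\<lambda>j\<in>{1..n}. u (f j))"
    have w: "w \<in> power_verts {1..n} V"
      unfolding w_def using restrict_comp_in_power_verts[OF u] bij_betw_imp_surj_on[OF f] by blast
    have "(\<lambda>s\<in>S. w (g s)) = restrict u S"
      unfolding w_def using g fg by (intro restrict_ext) auto
    also have "\<dots> = u"
      using u unfolding power_verts_def by simp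
    finally have "\<Psi> u = \<phi> (w i)"
      using triv w by metis
    then show ?thesis
      using i unfolding w_def by simp
  qed
  moreover have "f i \<in> S"
    using f i by (meson bij_betwE)
  ultimately show ?thesis
    using \<phi> unfolding trivial_coloring_def by blast
qed

locale power_coloring =
  fixes V :: "'a set" and E :: "'a \<Rightarrow> 'a \<Rightarrow> bool"
    and \<Lambda> :: "'i set" and \<Phi> :: "('i \<Rightarrow> 'a) \<Rightarrow> nat"
  assumes trivially_power_colorable: "trivially_power_colorable V E"
    and finite_V: "finite V"
    and \<Lambda>_nonempty: "\<Lambda> \<noteq> {}"
    and coloring: "k_coloring (chromatic_number V E) (power_verts \<Lambda> V) (power_edges \<Lambda> E) \<Phi>"
begin

definition diagonal :: "'a \<Rightarrow> nat" where
  "diagonal x = \<Phi> (\<lambda>\<alpha>\<in>\<Lambda>. x)"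

text \<open>
  The map \<open>q\<close> encodes the partition of \<open>\<Lambda>\<close> into its fibres; \<open>s\<close> is a dictator if, on
  vertices constant on every fibre, \<open>\<Phi>\<close> only depends on the value taken on the fibre of \<open>s\<close>.
\<close>
definition dictator :: "('i \<Rightarrow> 'b) \<Rightarrow> 'b \<Rightarrow> bool" where
  "dictator q s \<longleftrightarrow> s \<in> q ` \<Lambda> \<and>
     (\<forall>w\<in>q ` \<Lambda> \<rightarrow>\<^sub>E V. \<Phi> (\<lambda>\<alpha>\<in>\<Lambda>. w (q \<alpha>)) = diagonal (w s))"

definition decisive :: "'i set \<Rightarrow> bool" where
  "decisive A \<longleftrightarrow> A \<subseteq> \<Lambda> \<and>
     (\<forall>v\<in>power_verts \<Lambda> V. \<forall>x\<in>V. (\<forall>\<alpha>\<in>A. v \<alpha> = x) \<longrightarrow> \<Phi> v = diagonal x)"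

lemma dictator_exists:
  assumes "finite (q ` \<Lambda>)"
  obtains s where "dictator q s"
proof -
  have "trivial_coloring (q ` \<Lambda>) V E (\<lambda>w. \<Phi> (\<lambda>\<alpha>\<in>\<Lambda>. w (q \<alpha>)))"
    using trivial_coloring_finite_power[OF trivially_power_colorable assms]
      k_coloring_restrict_comp[OF coloring] \<Lambda>_nonempty by blast
  then obtain s \<phi> where s: "s \<in> q ` \<Lambda>"
    and triv: "\<forall>w\<in>power_verts (q ` \<Lambda>) V. \<Phi> (\<lambda>\<alpha>\<in>\<Lambda>. w (q \<alpha>)) = \<phi> (w s)"
    unfolding trivial_coloring_def by blast
  have "\<phi> x = diagonal x" if "x \<in> V" for x
  proof -
    have "\<Phi> (\<lambda>\<alpha>\<in>\<Lambda>. (\<lambda>t\<in>q ` \<Lambda>. x) (q \<alpha>)) = \<phi> x"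
      using triv[rule_format, of "\<lambda>t\<in>q ` \<Lambda>. x"] that s unfolding power_verts_def by simp
    moreover have "(\<lambda>\<alpha>\<in>\<Lambda>. (\<lambda>t\<in>q ` \<Lambda>. x) (q \<alpha>)) = (\<lambda>\<alpha>\<in>\<Lambda>. x)"
      by (intro restrict_ext) simp
    ultimately show ?thesis
      unfolding diagonal_def by simp
  qed
  then have "dictator q s"
    using s triv PiE_mem[of _ "q ` \<Lambda>" "\<lambda>_. V" s] unfolding dictator_def power_verts_def by simp
  then show ?thesis ..
qed

lemma dictator_factor:
  assumes p: "dictator p s" and q: "\<And>\<alpha>. \<alpha> \<in> \<Lambda> \<Longrightarrow> q \<alpha> = h (p \<alpha>)"
  shows "dictator q (h s)"
proof -
  have "h ` p ` \<Lambda> = q ` \<Lambda>"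
    using q by (auto simp: image_iff)
  moreover have "\<Phi> (\<lambda>\<alpha>\<in>\<Lambda>. w (q \<alpha>)) = diagonal (w (h s))" if w: "w \<in> q ` \<Lambda> \<rightarrow>\<^sub>E V" for w
  proof -
    define w' where "w' = (\<lambda>t\<in>p ` \<Lambda>. w (h t))"
    have "w' \<in> p ` \<Lambda> \<rightarrow>\<^sub>E V"
      unfolding w'_def using w q by auto
    then have "\<Phi> (\<lambda>\<alpha>\<in>\<Lambda>. w' (p \<alpha>)) = diagonal (w' s)"
      using p unfolding dictator_def by blast
    moreover have "(\<lambda>\<alpha>\<in>\<Lambda>. w' (p \<alpha>)) = (\<lambda>\<alpha>\<in>\<Lambda>. w (q \<alpha>))"
      unfolding w'_def using q by (intro restrict_ext) simp
    moreover have "w' s = w (h s)"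
      unfolding w'_def using p unfolding dictator_def by simp
    ultimately show ?thesis
      by simp
  qed
  ultimately show ?thesis
    using p unfolding dictator_def by blast
qed

lemma dictator_value:
  assumes v: "v \<in> power_verts \<Lambda> V" and x: "dictator v x"
  shows "\<Phi> v = diagonal x"
proof -
  define w where "w = (\<lambda>t\<in>v ` \<Lambda>. t)"
  have "w \<in> v ` \<Lambda> \<rightarrow>\<^sub>E V"
    unfolding w_def using v unfolding power_verts_def by auto
  then have "\<Phi> (\<lambda>\<alpha>\<in>\<Lambda>. w (v \<alpha>)) = diagonal (w x)"
    using x unfolding dictator_def by blast
  moreover have "(\<lambda>\<alpha>\<in>\<Lambda>. w (v \<alpha>)) = (\<lambda>\<alpha>\<in>\<Lambda>. v \<alpha>)"
    unfolding w_def by (intro restrict_ext) simp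
  moreover have "w x = x"
    unfolding w_def using x unfolding dictator_def by simp
  ultimately have "\<Phi> (\<lambda>\<alpha>\<in>\<Lambda>. v \<alpha>) = diagonal x"
    by simp
  then show ?thesis
    using v unfolding power_verts_def by simp
qed

lemma finite_image_power_vert:
  assumes "v \<in> power_verts \<Lambda> V"
  shows "finite (v ` \<Lambda>)"
  using assms finite_V unfolding power_verts_def by (auto intro: finite_subset)

lemma decisive_superset:
  assumes "decisive A" and "A \<subseteq> B" and "B \<subseteq> \<Lambda>"
  shows "decisive B"
  using assms unfolding decisive_def by blast

lemma decisive_\<Lambda>: "decisive \<Lambda>"
  unfolding decisive_def
proof (intro conjI ballI impI subset_refl)
  fix v x
  assume "v \<in> power_verts \<Lambda> V" and "\<forall>\<alpha>\<in>\<Lambda>. v \<alpha> = x"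
  then have "v = (\<lambda>\<alpha>\<in>\<Lambda>. x)"
    unfolding power_verts_def by (metis PiE_restrict restrict_ext)
  then show "\<Phi> v = diagonal x"
    unfolding diagonal_def by simp
qed

lemma ultrafilter_principal_ult_coloring:
  assumes "\<And>x y. \<not> E x y"
  shows "\<exists>U. ultrafilter_on \<Lambda> U \<and> (\<forall>v\<in>power_verts \<Lambda> V. \<Phi> v = ult_coloring \<Lambda> U V diagonal v)"
proof -
  obtain a where a: "a \<in> \<Lambda>"
    using \<Lambda>_nonempty by blast
  define U where "U = {A. A \<subseteq> \<Lambda> \<and> a \<in> A}"
  have "k_coloring 1 V E (\<lambda>_. 0)"
    using assms unfolding k_coloring_def proper_coloring_def by simp
  then have one_color: "chromatic_number V E \<le> 1"
    unfolding chromatic_number_def by (metis Least_le)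
  have "\<Phi> v = ult_coloring \<Lambda> U V diagonal v" if v: "v \<in> power_verts \<Lambda> V" for v
  proof -
    have va: "v a \<in> V"
      using v a unfolding power_verts_def by auto
    have "ult_point \<Lambda> U V v = v a"
      unfolding ult_point_def U_def by (rule the_equality) (use va a in auto)
    moreover have "\<Phi> v < chromatic_number V E" and "diagonal (v a) < chromatic_number V E"
      using coloring k_coloring_diagonal[OF coloring] v va
      unfolding k_coloring_def diagonal_def by blast+
    ultimately show ?thesis
      using one_color unfolding ult_coloring_def by simp
  qed
  moreover have "ultrafilter_on \<Lambda> U"
    unfolding ultrafilter_on_def U_def using a by auto
  ultimately show ?thesis
    by blast
qed

end

locale nonconstant_power_coloring = power_coloring +
  fixes x0 y0 :: 'a
  assumes x0: "x0 \<in> V" and y0: "y0 \<in> V"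
    and diagonal_nonconstant: "diagonal x0 \<noteq> diagonal y0"
begin

lemma dictator_unique:
  assumes s: "dictator q s" and t: "dictator q t"
  shows "s = t"
proof (rule ccontr)
  assume "s \<noteq> t"
  define w where "w = (\<lambda>u\<in>q ` \<Lambda>. if u = s then x0 else y0)"
  have "w \<in> q ` \<Lambda> \<rightarrow>\<^sub>E V"
    unfolding w_def using x0 y0 by auto
  then have "diagonal (w s) = diagonal (w t)"
    using s t unfolding dictator_def by metis
  moreover have "w s = x0" and "w t = y0"
    using s t \<open>s \<noteq> t\<close> unfolding w_def dictator_def by auto
  ultimately show False
    using diagonal_nonconstant by simp
qed

lemma decisive_disjoint:
  assumes A: "decisive A" and B: "decisive B"
  shows "A \<inter> B \<noteq> {}"
proof
  assume disjoint: "A \<inter> B = {}"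
  define v where "v = (\<lambda>\<alpha>\<in>\<Lambda>. if \<alpha> \<in> A then x0 else y0)"
  have v: "v \<in> power_verts \<Lambda> V"
    unfolding v_def power_verts_def using x0 y0 by auto
  have "\<forall>\<alpha>\<in>A. v \<alpha> = x0" and "\<forall>\<alpha>\<in>B. v \<alpha> = y0"
    using A B disjoint unfolding decisive_def v_def by auto
  then have "\<Phi> v = diagonal x0" and "\<Phi> v = diagonal y0"
    using A B v x0 y0 unfolding decisive_def by blast+
  then show False
    using diagonal_nonconstant by simp
qed

text \<open>
  Refining \<open>q\<close> by \<open>v\<close> itself: the dictator of the refinement lies over the dictator \<open>s\<close>
  of \<open>q\<close> and over the dictator of \<open>v\<close>, which is the value of \<open>v\<close> on the fibre of \<open>s\<close>.
\<close>
lemma dictator_fibre_decisive: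
  assumes fin: "finite (q ` \<Lambda>)" and s: "dictator q s"
  shows "decisive {\<alpha>\<in>\<Lambda>. q \<alpha> = s}"
  unfolding decisive_def
proof (intro conjI ballI impI)
  fix v x
  assume v: "v \<in> power_verts \<Lambda> V" and "x \<in> V" and const: "\<forall>\<alpha>\<in>{\<alpha>\<in>\<Lambda>. q \<alpha> = s}. v \<alpha> = x"
  define p where "p = (\<lambda>\<alpha>. (q \<alpha>, v \<alpha>))"
  have "p ` \<Lambda> \<subseteq> q ` \<Lambda> \<times> v ` \<Lambda>"
    unfolding p_def by auto
  then have "finite (p ` \<Lambda>)"
    using fin finite_image_power_vert[OF v] by (meson finite_SigmaI finite_subset)
  then obtain r where r: "dictator p r"
    by (rule dictator_exists)
  have "fst r = s"
    using dictator_unique[OF dictator_factor[OF r] s] by (simp add: p_def)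
  moreover obtain \<alpha> where "\<alpha> \<in> \<Lambda>" and "r = p \<alpha>"
    using r unfolding dictator_def by blast
  ultimately have "snd r = x"
    using const unfolding p_def by simp
  moreover have "dictator v (snd r)"
    using dictator_factor[OF r, of v snd] by (simp add: p_def)
  ultimately show "\<Phi> v = diagonal x"
    using dictator_value[OF v] by simp
qed auto

lemma decisive_fibre_exists:
  assumes "finite (q ` \<Lambda>)"
  obtains s where "decisive {\<alpha>\<in>\<Lambda>. q \<alpha> = s}"
  using dictator_exists[OF assms] dictator_fibre_decisive[OF assms] by metis

lemma ultrafilter_decisive: "ultrafilter_on \<Lambda> (Collect decisive)"
  unfolding ultrafilter_on_def
proof (intro conjI allI impI)
  show "Collect decisive \<subseteq> Pow \<Lambda>" and "\<Lambda> \<in> Collect decisive"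
    using decisive_\<Lambda> unfolding decisive_def by auto
  show "{} \<notin> Collect decisive"
    using decisive_disjoint by blast
  show "B \<in> Collect decisive" if "A \<in> Collect decisive" "A \<subseteq> B" "B \<subseteq> \<Lambda>" for A B
    using that decisive_superset by blast
next
  fix A B
  assume A: "A \<in> Collect decisive" and B: "B \<in> Collect decisive"
  obtain s where F: "decisive {\<alpha>\<in>\<Lambda>. (\<alpha> \<in> A, \<alpha> \<in> B) = s}"
    by (rule decisive_fibre_exists) (rule finite_subset[OF subset_UNIV finite_UNIV])
  obtain a where "a \<in> A" and "(a \<in> A, a \<in> B) = s"
    using decisive_disjoint[OF F] A by blast
  moreover obtain b where "b \<in> B" and "(b \<in> A, b \<in> B) = s"
    using decisive_disjoint[OF F] B by blast
  ultimately have "s = (True, True)"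
    by auto
  then have "{\<alpha>\<in>\<Lambda>. (\<alpha> \<in> A, \<alpha> \<in> B) = s} \<subseteq> A \<inter> B"
    by auto
  moreover have "A \<inter> B \<subseteq> \<Lambda>"
    using A unfolding decisive_def by auto
  ultimately show "A \<inter> B \<in> Collect decisive"
    using decisive_superset[OF F] by blast
next
  fix A
  assume "A \<subseteq> \<Lambda>"
  obtain s where "decisive {\<alpha>\<in>\<Lambda>. (\<alpha> \<in> A) = s}"
    by (rule decisive_fibre_exists) (rule finite_subset[OF subset_UNIV finite_UNIV])
  moreover have "{\<alpha>\<in>\<Lambda>. (\<alpha> \<in> A) = s} \<in> {A, \<Lambda> - A}"
    using \<open>A \<subseteq> \<Lambda>\<close> by (cases s) auto
  ultimately show "A \<in> Collect decisive \<or> \<Lambda> - A \<in> Collect decisive"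
    by auto
qed

lemma ult_coloring_diagonal:
  assumes v: "v \<in> power_verts \<Lambda> V"
  shows "\<Phi> v = ult_coloring \<Lambda> (Collect decisive) V diagonal v"
proof -
  obtain x where x: "dictator v x"
    using dictator_exists[OF finite_image_power_vert[OF v]] .
  have "x \<in> V"
    using x v unfolding dictator_def power_verts_def by auto
  moreover have F: "decisive {\<alpha>\<in>\<Lambda>. v \<alpha> = x}"
    using dictator_fibre_decisive[OF finite_image_power_vert[OF v] x] .
  ultimately have "ult_point \<Lambda> (Collect decisive) V v = x"
    unfolding ult_point_def using decisive_disjoint[OF F] by (intro the_equality) auto
  then show ?thesis
    using dictator_value[OF v x] unfolding ult_coloring_def by simp
qed

end

theorem mainTheorem15:
  fixes V :: "'a set" and E :: "'a \<Rightarrow> 'a \<Rightarrow> bool"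
    and \<Lambda> :: "'i set" and \<Phi> :: "('i \<Rightarrow> 'a) \<Rightarrow> nat"
  assumes "simple_graph V E" and "finite V"
    and "trivially_power_colorable V E"
    and "infinite \<Lambda>"
    and "k_coloring (chromatic_number V E) (power_verts \<Lambda> V) (power_edges \<Lambda> E) \<Phi>"
  shows "\<exists>U \<phi>. ultrafilter_on \<Lambda> U \<and> k_coloring (chromatic_number V E) V E \<phi> \<and>
           (\<forall>v\<in>power_verts \<Lambda> V. \<Phi> v = ult_coloring \<Lambda> U V \<phi> v)"
proof -
  interpret power_coloring V E \<Lambda> \<Phi>
    using assms by unfold_locales auto
  have diagonal: "k_coloring (chromatic_number V E) V E diagonal"
    using k_coloring_diagonal[OF coloring] unfolding diagonal_def[abs_def] .
  have "\<exists>U. ultrafilter_on \<Lambda> U \<and> (\<forall>v\<in>power_verts \<Lambda> V. \<Phi> v = ult_coloring \<Lambda> U V diagonal v)"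
  proof (cases "\<exists>x y. E x y")
    case True
    then obtain x0 y0 where "E x0 y0"
      by blast
    moreover from this have "x0 \<in> V" and "y0 \<in> V"
      using \<open>simple_graph V E\<close> unfolding simple_graph_def by auto
    ultimately interpret nonconstant_power_coloring V E \<Lambda> \<Phi> x0 y0
      using diagonal by unfold_locales (auto simp: k_coloring_def proper_coloring_def)
    show ?thesis
      using ultrafilter_decisive ult_coloring_diagonal by blast
  next
    case False
    then show ?thesis
      by (intro ultrafilter_principal_ult_coloring) blast
  qed
  then show ?thesis
    using diagonal by blast
qed

end
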